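(* Let $E$ be a Hausdorff locally convex topological vector space, $\Omega$ a nonempty open subset of $E$, $F$ a nonempty subset of $E$ and $f:\Omega\to\mathbb{R}$ a function. Assume that $\hat{x}\in\Omega\cap F$ is an optimal solution of the problem of maximizing $f(x)$ subject to $x\in\Omega$, $x\in F$ (i.e. $f(\hat x)\ge f(x)$ for all $x\in\Omega\cap F$), that $f$ is Gateaux differentiable at $\hat{x}$, and that $F$ is weak-admissible at $\hat{x}$ and determined by a family $C$. Then either $\hat{x}\in\operatorname{int}(F)$ and therefore $d_G f(\hat{x})=0$, or, if $\hat{x}\in F\setminus\operatorname{int}(F)$, we have $0\in[d_G f(\hat{x}),\mathcal{T}_{C}(\hat{x})]$; that is, there exist $(\lambda^*,\beta^* )\in\mathbb{R}^+\times\mathbb{R}^+$ and $x^*\in\mathcal{T}_{C}(\hat{x})$ such that (i) $(\lambda^*,\beta^* )\neq(0,0)$ and (ii) $\lambda^* d_G f(\hat{x})+\beta^* x^*=0$. If moreover $0\notin\mathcal{T}_{C}(\hat{x})$ (in particular if $E$ is a normed space and $F$ is admissible at $\hat{x}$, determined by $C$), then one can choose $\lambda^*=1$.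
   Context: $E^*$ is the topological dual of $E$, equipped with the weak-star ($w^*$) topology; $\overline{\operatorname{conv}}^{w^*}(B)$ is the $w^*$-closed convex hull of $B\subset E^*$. A map $g$ from $E$ (or an open subset) into a normed space $Y$ is Gateaux differentiable at $x$ if there is a continuous linear map $d_Gg(x):E\to Y$ with $\lim_{t\searrow 0}\|(g(x+tv)-g(x)-t\,d_Gg(x)(v))/t\|=0$ for every $v\in E$. For a family $C$ of functions $\phi:E\to\mathbb{R}$, $[C]^\times:=\{x\in E:\phi(x)\ge 0\ \forall\phi\in C\}$. $C$ is equi-Gateaux differentiable at $x$ if each $\phi\in C$ is Gateaux differentiable at $x$ and for every $v\in E$, $\lim_{t\searrow0}\sup_{\phi\in C}|(\phi(x+tv)-\phi(x)-t\langle d_G\phi(x),v\rangle)/t|=0$. $C$ is equi-lower semicontinuous at $x$ if for every $\varepsilon>0$ there is an open neighbourhood $O$ of $x$ with $\phi(y)-\phi(x)>-\varepsilon$ for all $y\in O$ and all $\phi\in C$. If $E$ is normed, $C$ is $r$-equi-Lipschitz at $x$ ($r\ge0$) if there is a ball centered at $x$ on which every $\phi\in C$ is $r$-Lipschitz. A set $F\subset E$ is weak-admissible at $\hat x\in F$, determined by $C$, if $C$ is a nonempty family of functions $E\to\mathbb{R}$ with: (a) $F=[C]^\times$; (b) $C$ is equi-Gateaux differentiable at $\hat x$; (c) $\{\phi\in C:\phi(\hat x)\ne0\}$ is empty or equi-lower semicontinuous at $\hat x$; (d) $\overline{\operatorname{conv}}^{w^*}\{d_G\phi(\hat x):\phi\in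 C\}$ is $w^*$-compact in $E^*$. If $E$ is normed, $F$ is admissible at $\hat x\in F$, determined by $C$, if $C$ is a nonempty family of functions $E\to\mathbb{R}$ with: (a) $F=[C]^\times$; (b) $C$ is equi-Gateaux differentiable and $r$-equi-Lipschitz at $\hat x$ for some $r\ge0$; (c) $0\notin\overline{\operatorname{conv}}^{w^*}\{d_G\phi(\hat x):\phi\in C\}$. $\mathcal{T}_C(\hat x):=\bigcap_{n\ge1}\overline{\operatorname{conv}}^{w^*}\{d_G\phi(\hat x):\phi\in C,\ \phi(\hat x)\in[0,1/n]\}\subset E^*$. For a point $w$ and a set $K$, $[w,K]:=\{\lambda w+(1-\lambda)x:\lambda\in[0,1],x\in K\}$. *)

theory Defs
  imports "HOL-Analysis.Analysis"
begin

definition hlc_tvs :: "'a::{real_vector,t2_space} itself \<Rightarrow> bool" where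
  "hlc_tvs _ \<longleftrightarrow>
     continuous_on UNIV (\<lambda>(x::'a, y::'a). x + y) \<and>
     continuous_on UNIV (\<lambda>(c::real, x::'a). c *\<^sub>R x) \<and>
     (\<forall>U::'a set. open U \<and> 0 \<in> U \<longrightarrow> (\<exists>V. open V \<and> convex V \<and> 0 \<in> V \<and> V \<subseteq> U))"

text \<open>Viewed inside the
  function space 'a \<Rightarrow> real with the product topology, the subspace topology on
  E* is exactly the weak-star topology.\<close>
definition dual_space :: "('a::{real_vector,topological_space} \<Rightarrow> real) set" where
  "dual_space = {\<phi>. linear \<phi> \<and> continuous_on UNIV \<phi>}"

definition fconv :: "('a \<Rightarrow> real) set \<Rightarrow> ('a \<Rightarrow> real) set" where
  "fconv B = {\<lambda>v. \<Sum>i<n. a i * b i v | (n::nat) (a::nat\<Rightarrow>real) b.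
     (\<forall>i<n. 0 \<le> a i \<and> b i \<in> B) \<and> (\<Sum>i<n. a i) = 1}"

definition wstar_cconv :: "('a::{real_vector,topological_space} \<Rightarrow> real) set \<Rightarrow> ('a \<Rightarrow> real) set" where
  "wstar_cconv B = closure (fconv B) \<inter> dual_space"

definition has_gateaux_deriv :: "('a::{real_vector,topological_space} \<Rightarrow> real) \<Rightarrow> 'a \<Rightarrow> ('a \<Rightarrow> real) \<Rightarrow> bool" where
  "has_gateaux_deriv g x d \<longleftrightarrow> d \<in> dual_space \<and>
     (\<forall>v. ((\<lambda>t. \<bar>(g (x + t *\<^sub>R v) - g x - t * d v) / t\<bar>) \<longlongrightarrow> 0) (at_right 0))"

definition gateaux_differentiable :: "('a::{real_vector,topological_space} \<Rightarrow> real) \<Rightarrow> 'a \<Rightarrow> bool" where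
  "gateaux_differentiable g x \<longleftrightarrow> (\<exists>d. has_gateaux_deriv g x d)"

definition gat_deriv :: "('a::{real_vector,topological_space} \<Rightarrow> real) \<Rightarrow> 'a \<Rightarrow> ('a \<Rightarrow> real)" where
  "gat_deriv g x = (SOME d. has_gateaux_deriv g x d)"

definition nonneg_set :: "('a \<Rightarrow> real) set \<Rightarrow> 'a set" where
  "nonneg_set C = {x. \<forall>\<phi>\<in>C. \<phi> x \<ge> 0}"

text \<open>Equi-Gateaux differentiability: the supremum over C of the difference
  quotient errors tends to 0, written in epsilon form.\<close>
definition equi_gateaux :: "('a::{real_vector,topological_space} \<Rightarrow> real) set \<Rightarrow> 'a \<Rightarrow> bool" where
  "equi_gateaux C x \<longleftrightarrow> (\<forall>\<phi>\<in>C. gateaux_differentiable \<phi> x) \<and>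
     (\<forall>v. \<forall>\<epsilon>>0. eventually (\<lambda>t. \<forall>\<phi>\<in>C.
        \<bar>(\<phi> (x + t *\<^sub>R v) - \<phi> x - t * gat_deriv \<phi> x v) / t\<bar> < \<epsilon>) (at_right 0))"

definition equi_lsc :: "('a::topological_space \<Rightarrow> real) set \<Rightarrow> 'a \<Rightarrow> bool" where
  "equi_lsc C x \<longleftrightarrow> (\<forall>\<epsilon>>0. \<exists>W. open W \<and> x \<in> W \<and> (\<forall>y\<in>W. \<forall>\<phi>\<in>C. \<phi> y - \<phi> x > - \<epsilon>))"

definition weak_admissible :: "'a::{real_vector,topological_space} set \<Rightarrow> 'a \<Rightarrow> ('a \<Rightarrow> real) set \<Rightarrow> bool" where
  "weak_admissible F x C \<longleftrightarrow> x \<in> F \<and> C \<noteq> {} \<and> F = nonneg_set C \<and> equi_gateaux C x \<and>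
     ({\<phi>\<in>C. \<phi> x \<noteq> 0} = {} \<or> equi_lsc {\<phi>\<in>C. \<phi> x \<noteq> 0} x) \<and>
     compact (wstar_cconv ((\<lambda>\<phi>. gat_deriv \<phi> x) ` C))"

definition T_C :: "('a::{real_vector,topological_space} \<Rightarrow> real) set \<Rightarrow> 'a \<Rightarrow> ('a \<Rightarrow> real) set" where
  "T_C C x = (\<Inter>n\<in>{1::nat..}. wstar_cconv {gat_deriv \<phi> x | \<phi>. \<phi> \<in> C \<and> \<phi> x \<in> {0..1 / real n}})"

end

theory Submission
  imports Defs
begin

(* At an interior maximum the Gateaux derivative is nonpositive along every ray, hence zero by
   linearity. At a boundary point fix \<epsilon> > 0 and let T\<^sub>\<epsilon> be the w*-closed convex hull of the
   derivatives of the \<epsilon>-active constraints (\<phi>(x) \<le> \<epsilon>); it is w*-compact, and nonempty because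
   otherwise equi-lower semicontinuity would put x in the interior of F. If no segment from
   d f(x) to T\<^sub>\<epsilon> passed through 0, these segments would form a compact convex set of linear
   functionals bounded below by some m > 0 in a direction v. Moving from x along v keeps the
   \<epsilon>-active constraints nonnegative (equi-differentiability) and the others positive (equi-lower
   semicontinuity) while f increases: a contradiction. The pairs (l, x) with x \<in> T\<^sub>\<epsilon> and
   l d f(x) + (1 - l) x = 0 thus form, for \<epsilon> = 1/n, a decreasing sequence of nonempty closed
   subsets of a compact set, and a common point gives the multipliers. *)

lemma has_gateaux_deriv_gat_deriv:
  "gateaux_differentiable g x \<Longrightarrow> has_gateaux_deriv g x (gat_deriv g x)"
  unfolding gateaux_differentiable_def gat_deriv_def by (metis someI_ex)

lemma dual_space_linear: "k \<in> dual_space \<Longrightarrow> linear k"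
  unfolding dual_space_def by blast

lemma dual_space_lincomb:
  "x \<in> dual_space \<Longrightarrow> y \<in> dual_space \<Longrightarrow> (\<lambda>v. a * x v + b * y v) \<in> dual_space"
  unfolding dual_space_def by (auto simp: linear_iff algebra_simps intro!: continuous_intros)

lemma hlc_tvs_eventually_ray_in_open:
  assumes "hlc_tvs TYPE('a::{real_vector,t2_space})" "open U" "(x::'a) \<in> U"
  shows "eventually (\<lambda>t. x + t *\<^sub>R v \<in> U) (at_right 0)"
proof -
  have add: "continuous_on UNIV (\<lambda>(x::'a, y::'a). x + y)"
    and scale: "continuous_on UNIV (\<lambda>(c::real, y::'a). c *\<^sub>R y)"
    using assms(1) unfolding hlc_tvs_def by auto
  have "continuous_on UNIV (\<lambda>t::real. (\<lambda>(c, y). c *\<^sub>R y) (t, v))"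
    by (rule continuous_on_compose2[OF scale]) (auto intro: continuous_intros)
  then have "continuous_on UNIV (\<lambda>t::real. (\<lambda>(a, b). a + b) (x, t *\<^sub>R v))"
    by (intro continuous_on_compose2[OF add]) (auto intro: continuous_intros)
  then have "isCont (\<lambda>t::real. x + t *\<^sub>R v) 0"
    by (simp add: continuous_on_eq_continuous_at)
  then have "((\<lambda>t::real. x + t *\<^sub>R v) \<longlongrightarrow> x) (at_right 0)"
    unfolding isCont_def by (simp add: tendsto_mono[OF at_le[OF subset_UNIV]])
  then show ?thesis
    using assms(2,3) topological_tendstoD by blast
qed

lemma neg_mult_less_if_abs_divide_less:
  fixes q t c :: real
  shows "0 < t \<Longrightarrow> \<bar>q / t\<bar> < c \<Longrightarrow> - c * t < q"
  by (simp add: abs_less_iff field_simps)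

lemma has_gateaux_deriv_eventually_increasing:
  assumes "has_gateaux_deriv g x d" "0 < d v"
  shows "eventually (\<lambda>t. g x < g (x + t *\<^sub>R v)) (at_right 0)"
proof -
  have "eventually (\<lambda>t. \<bar>(g (x + t *\<^sub>R v) - g x - t * d v) / t\<bar> < d v) (at_right 0)"
    using assms order_tendstoD(2) unfolding has_gateaux_deriv_def by blast
  with eventually_at_right_less show ?thesis
  proof eventually_elim
    case (elim t)
    from neg_mult_less_if_abs_divide_less[OF elim] show ?case by simp
  qed
qed

lemma equi_gateaux_eventually_lower_bound:
  assumes "equi_gateaux C x" "0 < c"
  shows "eventually (\<lambda>t. \<forall>\<phi>\<in>C. \<phi> x + t * (gat_deriv \<phi> x v - c) < \<phi> (x + t *\<^sub>R v)) (at_right 0)"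
proof -
  have "eventually (\<lambda>t. \<forall>\<phi>\<in>C.
      \<bar>(\<phi> (x + t *\<^sub>R v) - \<phi> x - t * gat_deriv \<phi> x v) / t\<bar> < c) (at_right 0)"
    using assms unfolding equi_gateaux_def by blast
  with eventually_at_right_less show ?thesis
  proof eventually_elim
    case (elim t)
    then show ?case
      using neg_mult_less_if_abs_divide_less[OF elim(1)] by (fastforce simp: algebra_simps)
  qed
qed

lemma has_gateaux_deriv_local_max_eq_0:
  assumes "hlc_tvs TYPE('a::{real_vector,t2_space})" "open U" "(x::'a) \<in> U"
    and "\<forall>y\<in>U. g y \<le> g x" and "has_gateaux_deriv g x d"
  shows "d = (\<lambda>_. 0)"
proof -
  have nonpos: "d v \<le> 0" for v
  proof (rule ccontr)
    assume "\<not> d v \<le> 0"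
    then have "eventually (\<lambda>t. g x < g (x + t *\<^sub>R v)) (at_right 0)"
      by (intro has_gateaux_deriv_eventually_increasing[OF assms(5)]) simp
    moreover have "eventually (\<lambda>t. x + t *\<^sub>R v \<in> U) (at_right 0)"
      using assms(1-3) by (rule hlc_tvs_eventually_ray_in_open)
    ultimately have "eventually (\<lambda>t. g x < g (x + t *\<^sub>R v) \<and> x + t *\<^sub>R v \<in> U) (at_right 0)"
      by (rule eventually_conj)
    then show False
      using assms(4) eventually_happens'[OF trivial_limit_at_right_real] by force
  qed
  have "linear d"
    using assms(5) unfolding has_gateaux_deriv_def by (simp add: dual_space_linear)
  show ?thesis
  proof
    fix v
    show "d v = 0"
      using nonpos[of v] nonpos[of "- v"] \<open>linear d\<close> by (simp add: real_vector.linear_neg)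
  qed
qed

(* Functions 'a \<Rightarrow> real carry no vector space instance, so convexity in E* is spelled out. *)
definition fconvex :: "('a \<Rightarrow> real) set \<Rightarrow> bool" where
  "fconvex S \<longleftrightarrow> (\<forall>x\<in>S. \<forall>y\<in>S. \<forall>s\<in>{0..1}. (\<lambda>v. (1 - s) * x v + s * y v) \<in> S)"

lemma fconvex_Int: "fconvex S \<Longrightarrow> fconvex T \<Longrightarrow> fconvex (S \<inter> T)"
  unfolding fconvex_def by blast

lemma fconvex_dual_space: "fconvex dual_space"
  unfolding fconvex_def by (auto intro: dual_space_lincomb)

lemma sum_lessThan_add:
  "(\<Sum>i<n + m. g i) = (\<Sum>i<n. g i) + (\<Sum>i<m. g (n + i))" for g :: "nat \<Rightarrow> real"
  by (induction m) (auto simp: add.assoc)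

lemma fconvex_fconv: "fconvex (fconv B)"
  unfolding fconvex_def
proof (intro ballI)
  fix x y s
  assume "x \<in> fconv B" "y \<in> fconv B" "s \<in> {0..1::real}"
  then obtain n m :: nat and a b a' b'
    where x: "x = (\<lambda>v. \<Sum>i<n. a i * b i v)" "\<forall>i<n. 0 \<le> a i \<and> b i \<in> B" "(\<Sum>i<n. a i) = 1"
      and y: "y = (\<lambda>v. \<Sum>i<m. a' i * b' i v)" "\<forall>i<m. 0 \<le> a' i \<and> b' i \<in> B" "(\<Sum>i<m. a' i) = 1"
      and s: "0 \<le> s" "s \<le> 1"
    unfolding fconv_def by auto
  define c where "c i = (if i < n then (1 - s) * a i else s * a' (i - n))" for i
  define e where "e i = (if i < n then b i else b' (i - n))" for i
  have "(\<lambda>v. (1 - s) * x v + s * y v) = (\<lambda>v. \<Sum>i<n + m. c i * e i v)"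
    unfolding x y sum_lessThan_add c_def e_def
    by (auto simp: sum_distrib_left algebra_simps intro!: arg_cong2[where f="(+)"] sum.cong)
  moreover have "(\<Sum>i<n + m. c i) = 1"
    using x(3) y(3) unfolding sum_lessThan_add c_def by (simp add: sum_distrib_left[symmetric])
  moreover have "\<forall>i<n + m. 0 \<le> c i \<and> e i \<in> B"
    using x(2) y(2) s unfolding c_def e_def by auto
  ultimately show "(\<lambda>v. (1 - s) * x v + s * y v) \<in> fconv B"
    unfolding fconv_def by blast
qed

lemma fconvex_closure:
  fixes S :: "('a::topological_space \<Rightarrow> real) set"
  assumes "fconvex S"
  shows "fconvex (closure S)"
  unfolding fconvex_def
proof (intro ballI)
  fix x y s
  assume x: "x \<in> closure S" and y: "y \<in> closure S" and s: "s \<in> {0..1::real}"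
  let ?comb = "\<lambda>z::('a \<Rightarrow> real) \<times> ('a \<Rightarrow> real). (\<lambda>v. (1 - s) * fst z v + s * snd z v)"
  have "continuous_on UNIV ?comb"
    by (intro continuous_on_coordinatewise_then_product continuous_intros
        continuous_on_product_then_coordinatewise[OF continuous_on_fst[OF continuous_on_id]]
        continuous_on_product_then_coordinatewise[OF continuous_on_snd[OF continuous_on_id]])
  then have "?comb ` closure (S \<times> S) \<subseteq> closure S"
    using assms s unfolding fconvex_def
    by (intro image_closure_subset) (auto intro: continuous_on_subset closure_subset[THEN subsetD])
  moreover have "(x, y) \<in> closure (S \<times> S)"
    using x y by (simp add: closure_Times)
  ultimately show "(\<lambda>v. (1 - s) * x v + s * y v) \<in> closure S"
    by force
qed

lemma fconvex_wstar_cconv: "fconvex (wstar_cconv B)"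
  unfolding wstar_cconv_def
  by (intro fconvex_Int fconvex_closure fconvex_fconv fconvex_dual_space)

lemma subset_wstar_cconv:
  assumes "B \<subseteq> dual_space"
  shows "B \<subseteq> wstar_cconv B"
proof
  fix b assume "b \<in> B"
  then have "b \<in> fconv B"
    unfolding fconv_def by (intro CollectI exI[of _ 1] exI[of _ "\<lambda>_. 1"] exI[of _ "\<lambda>_. b"]) auto
  with \<open>b \<in> B\<close> assms show "b \<in> wstar_cconv B"
    unfolding wstar_cconv_def using closure_subset by blast
qed

lemma fconv_mono: "A \<subseteq> B \<Longrightarrow> fconv A \<subseteq> fconv B"
  unfolding fconv_def by blast

lemma wstar_cconv_mono: "A \<subseteq> B \<Longrightarrow> wstar_cconv A \<subseteq> wstar_cconv B"
  unfolding wstar_cconv_def by (meson Int_mono closure_mono fconv_mono order_refl)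

lemma wstar_cconv_subset_eq:
  assumes "A \<subseteq> B"
  shows "wstar_cconv A = wstar_cconv B \<inter> closure (fconv A)"
  using wstar_cconv_mono[OF assms] unfolding wstar_cconv_def by blast

lemma compact_wstar_cconv_subset:
  assumes "compact (wstar_cconv B)" "A \<subseteq> B"
  shows "compact (wstar_cconv A)"
  using assms by (simp add: wstar_cconv_subset_eq compact_Int_closed)

lemma continuous_on_segment_comb:
  "continuous_on UNIV (\<lambda>(l, x). \<lambda>v. l * d v + (1 - l) * x v :: real)"
  unfolding case_prod_beta
  by (intro continuous_on_coordinatewise_then_product continuous_intros
      continuous_on_product_then_coordinatewise[OF continuous_on_snd[OF continuous_on_id]])

lemma fconvex_segments:
  assumes "fconvex T"
  shows "fconvex ((\<lambda>(l, x). \<lambda>v. l * d v + (1 - l) * x v) ` ({0..1} \<times> T))"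
    (is "fconvex (?seg ` _)")
  unfolding fconvex_def
proof (intro ballI)
  fix z1 z2 s
  assume "z1 \<in> ?seg ` ({0..1} \<times> T)" "z2 \<in> ?seg ` ({0..1} \<times> T)" and s: "s \<in> {0..1::real}"
  then obtain l1 x1 l2 x2 where z: "z1 = ?seg (l1, x1)" "z2 = ?seg (l2, x2)"
    and l: "l1 \<in> {0..1}" "l2 \<in> {0..1}" and x: "x1 \<in> T" "x2 \<in> T"
    by auto
  define l where "l = (1 - s) * l1 + s * l2"
  have weights: "0 \<le> (1 - s) * (1 - l1)" "0 \<le> s * (1 - l2)"
    "(1 - s) * (1 - l1) + s * (1 - l2) = 1 - l"
    using l s unfolding l_def by (simp, simp, simp add: algebra_simps)
  have "0 \<le> l"
    using l s unfolding l_def by simp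
  with weights have l01: "l \<in> {0..1}"
    by simp
  have comb: "(\<lambda>v. (1 - s) * z1 v + s * z2 v)
      = (\<lambda>v. l * d v + ((1 - s) * (1 - l1) * x1 v + s * (1 - l2) * x2 v))"
    unfolding z l_def by (auto simp: algebra_simps)
  show "(\<lambda>v. (1 - s) * z1 v + s * z2 v) \<in> ?seg ` ({0..1} \<times> T)"
  proof (cases "l = 1")
    case True
    then have w0: "(1 - s) * (1 - l1) = 0" "s * (1 - l2) = 0"
      using weights by linarith+
    have "(\<lambda>v. (1 - s) * z1 v + s * z2 v) = ?seg (1, x1)"
      unfolding comb True w0 by simp
    moreover have "(1::real, x1) \<in> {0..1} \<times> T"
      using x by simp
    ultimately show ?thesis
      by (rule image_eqI)
  next
    case False
    then have "0 < 1 - l" using l01 by simp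
    define \<mu> where "\<mu> = s * (1 - l2) / (1 - l)"
    have "\<mu> \<in> {0..1}"
      using weights \<open>0 < 1 - l\<close> unfolding \<mu>_def by (simp add: divide_le_eq_1)
    then have "(l, \<lambda>v. (1 - \<mu>) * x1 v + \<mu> * x2 v) \<in> {0..1} \<times> T"
      using assms x l01 unfolding fconvex_def by blast
    moreover have scale2: "(1 - l) * \<mu> = s * (1 - l2)"
      using \<open>0 < 1 - l\<close> unfolding \<mu>_def by simp
    moreover have scale1: "(1 - l) * (1 - \<mu>) = (1 - s) * (1 - l1)"
      using weights(3) scale2 by (simp add: right_diff_distrib)
    ultimately have "(\<lambda>v. (1 - s) * z1 v + s * z2 v) = ?seg (l, \<lambda>v. (1 - \<mu>) * x1 v + \<mu> * x2 v)"
      unfolding comb by (simp add: distrib_left flip: scale1 scale2 mult.assoc)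
    then show ?thesis
      using \<open>(l, _) \<in> _\<close> by (rule image_eqI)
  qed
qed

lemma compact_obtains_finite_nonvanishing_points:
  fixes K :: "('a::topological_space \<Rightarrow> real) set"
  assumes "compact K" "(\<lambda>_. 0) \<notin> K"
  obtains V where "finite V" "\<forall>k\<in>K. \<exists>w\<in>V. k w \<noteq> 0"
proof -
  have "open {k::'a \<Rightarrow> real. k w \<noteq> 0}" for w
  proof -
    have "open ((\<lambda>k::'a \<Rightarrow> real. k w) -` (- {0}))"
      by (intro open_vimage open_Compl) auto
    then show ?thesis
      by (simp add: vimage_def)
  qed
  moreover have "K \<subseteq> (\<Union>w\<in>UNIV. {k. k w \<noteq> 0})"
  proof
    fix k
    assume "k \<in> K"
    with assms(2) have "k \<noteq> (\<lambda>_. 0)"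
      by blast
    then obtain w where "k w \<noteq> 0"
      by (meson ext)
    then show "k \<in> (\<Union>w\<in>UNIV. {k. k w \<noteq> 0})"
      by blast
  qed
  ultimately obtain V where "finite V" "K \<subseteq> (\<Union>w\<in>V. {k. k w \<noteq> 0})"
    by (rule compactE_image[OF assms(1)])
  then show ?thesis
    using that by blast
qed

lemma sum_power2_le_sum_mult_if_minimal_on_segment:
  fixes p k :: "'b \<Rightarrow> real"
  assumes "\<And>t. 0 < t \<Longrightarrow> t \<le> 1 \<Longrightarrow> (\<Sum>w\<in>V. (p w)\<^sup>2) \<le> (\<Sum>w\<in>V. ((1 - t) * p w + t * k w)\<^sup>2)"
  shows "(\<Sum>w\<in>V. (p w)\<^sup>2) \<le> (\<Sum>w\<in>V. p w * k w)"
proof -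
  define A where "A = (\<Sum>w\<in>V. p w * (k w - p w))"
  define Q where "Q = (\<Sum>w\<in>V. (k w - p w)\<^sup>2)"
  have expand: "(\<Sum>w\<in>V. ((1 - t) * p w + t * k w)\<^sup>2) = (\<Sum>w\<in>V. (p w)\<^sup>2) + t * (2 * A + t * Q)" for t
  proof -
    have "(\<Sum>w\<in>V. ((1 - t) * p w + t * k w)\<^sup>2)
        = (\<Sum>w\<in>V. (p w)\<^sup>2 + t * (2 * (p w * (k w - p w))) + t * (t * (k w - p w)\<^sup>2))"
      by (intro sum.cong) (auto simp: power2_eq_square algebra_simps)
    then show ?thesis
      unfolding A_def Q_def by (simp add: sum.distrib sum_distrib_left distrib_left)
  qed
  have "eventually (\<lambda>t. t \<in> {0<..<1}) (at_right (0::real))"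
    by (rule eventually_at_right_real) simp
  then have "eventually (\<lambda>t. 0 \<le> 2 * A + t * Q) (at_right 0)"
  proof eventually_elim
    case (elim t)
    then have "0 \<le> t * (2 * A + t * Q)"
      using assms[of t] expand[of t] by simp
    with elim show ?case
      by (simp add: zero_le_mult_iff)
  qed
  moreover have "((\<lambda>t. 2 * A + t * Q) \<longlongrightarrow> 2 * A) (at_right 0)"
    by (auto intro!: tendsto_eq_intros)
  ultimately have "0 \<le> A"
    using tendsto_lowerbound[of _ "2 * A"] by fastforce
  then show ?thesis
    unfolding A_def by (simp add: right_diff_distrib sum_subtractf power2_eq_square)
qed

text \<open>A finite-dimensional stand-in for the Hahn-Banach separation of 0 from K: compactness
  reduces to finitely many evaluation points, and the point of K of least Euclidean norm on
  them gives the separating direction.\<close>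
lemma compact_fconvex_separation_from_0:
  fixes K :: "('a::{real_vector,topological_space} \<Rightarrow> real) set"
  assumes "compact K" "fconvex K" "\<forall>k\<in>K. linear k" "(\<lambda>_. 0) \<notin> K"
  obtains v m where "0 < m" "\<forall>k\<in>K. m \<le> k v"
proof (cases "K = {}")
  case True
  then show ?thesis
    using that[of 1] by simp
next
  case False
  obtain V where V: "finite V" "\<forall>k\<in>K. \<exists>w\<in>V. k w \<noteq> 0"
    using compact_obtains_finite_nonvanishing_points[OF assms(1,4)] by blast
  define N where "N k = (\<Sum>w\<in>V. (k w)\<^sup>2)" for k :: "'a \<Rightarrow> real"
  have "continuous_on K N"
    unfolding N_def
    by (intro continuous_intros) (auto intro: continuous_on_subset[OF continuous_on_product_coordinates])
  then obtain k0 where k0: "k0 \<in> K" "\<forall>k\<in>K. N k0 \<le> N k"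
    using continuous_attains_inf[OF assms(1) False] by blast
  obtain w0 where "w0 \<in> V" "k0 w0 \<noteq> 0"
    using V(2) k0(1) by blast
  then have "0 < N k0"
    unfolding N_def using V(1) by (intro sum_pos2) auto
  moreover have "N k0 \<le> k (\<Sum>w\<in>V. k0 w *\<^sub>R w)" if "k \<in> K" for k
  proof -
    have "N k0 \<le> (\<Sum>w\<in>V. k0 w * k w)"
      unfolding N_def
    proof (rule sum_power2_le_sum_mult_if_minimal_on_segment)
      fix t :: real
      assume "0 < t" "t \<le> 1"
      then have "(\<lambda>w. (1 - t) * k0 w + t * k w) \<in> K"
        using assms(2) k0(1) that unfolding fconvex_def by auto
      then show "(\<Sum>w\<in>V. (k0 w)\<^sup>2) \<le> (\<Sum>w\<in>V. ((1 - t) * k0 w + t * k w)\<^sup>2)"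
        using k0(2) unfolding N_def by fastforce
    qed
    also have "\<dots> = k (\<Sum>w\<in>V. k0 w *\<^sub>R w)"
      using assms(3) that by (simp add: real_vector.linear_sum linear_cmul)
    finally show ?thesis .
  qed
  ultimately show ?thesis
    using that by blast
qed

lemma compact_Int_INTER_antimono_nonempty:
  fixes A :: "'i::linorder \<Rightarrow> 'a::topological_space set"
  assumes "compact S" "I \<noteq> {}" "\<And>i. i \<in> I \<Longrightarrow> closed (A i)" "\<And>i. i \<in> I \<Longrightarrow> S \<inter> A i \<noteq> {}"
    and "\<And>i j. i \<in> I \<Longrightarrow> j \<in> I \<Longrightarrow> i \<le> j \<Longrightarrow> A j \<subseteq> A i"
  shows "S \<inter> (\<Inter>i\<in>I. A i) \<noteq> {}"
  using assms(1,3)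
proof (rule compact_imp_fip_image)
  fix J
  assume J: "finite J" "J \<subseteq> I"
  show "S \<inter> (\<Inter>i\<in>J. A i) \<noteq> {}"
  proof (cases "J = {}")
    case True
    then show ?thesis
      using assms(2,4) by auto
  next
    case False
    with J have "Max J \<in> I"
      using Max_in by blast
    moreover have "A (Max J) \<subseteq> A i" if "i \<in> J" for i
      using J that \<open>Max J \<in> I\<close> by (intro assms(5)) auto
    ultimately show ?thesis
      using assms(4) by blast
  qed
qed

locale constrained_max =
  fixes f :: "'a::{real_vector,t2_space} \<Rightarrow> real"
    and \<Omega> F :: "'a set" and C :: "('a \<Rightarrow> real) set" and xh :: 'a
  assumes hlc: "hlc_tvs TYPE('a)"
    and open_\<Omega>: "open \<Omega>"
    and xh_in: "xh \<in> \<Omega> \<inter> F"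
    and xh_max: "\<forall>x\<in>\<Omega> \<inter> F. f x \<le> f xh"
    and f_diff: "gateaux_differentiable f xh"
    and admissible: "weak_admissible F xh C"
begin

lemma
  shows F_eq: "F = nonneg_set C"
    and C_equi_gateaux: "equi_gateaux C xh"
    and C_equi_lsc: "{\<phi>\<in>C. \<phi> xh \<noteq> 0} = {} \<or> equi_lsc {\<phi>\<in>C. \<phi> xh \<noteq> 0} xh"
    and compact_derivs: "compact (wstar_cconv ((\<lambda>\<phi>. gat_deriv \<phi> xh) ` C))"
  using admissible unfolding weak_admissible_def by auto

lemma constraint_nonneg: "\<phi> \<in> C \<Longrightarrow> 0 \<le> \<phi> xh"
  using xh_in unfolding F_eq nonneg_set_def by auto

lemma constraint_deriv_dual: "\<phi> \<in> C \<Longrightarrow> gat_deriv \<phi> xh \<in> dual_space"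
  using C_equi_gateaux has_gateaux_deriv_gat_deriv
  unfolding equi_gateaux_def has_gateaux_deriv_def by blast

lemma f_has_gateaux_deriv: "has_gateaux_deriv f xh (gat_deriv f xh)"
  using f_diff by (rule has_gateaux_deriv_gat_deriv)

lemma f_deriv_dual: "gat_deriv f xh \<in> dual_space"
  using f_has_gateaux_deriv unfolding has_gateaux_deriv_def by blast

definition active_derivs :: "real \<Rightarrow> ('a \<Rightarrow> real) set" where
  "active_derivs \<epsilon> = {gat_deriv \<phi> xh | \<phi>. \<phi> \<in> C \<and> \<phi> xh \<in> {0..\<epsilon>}}"

lemma T_C_eq_INTER_active_derivs:
  "T_C C xh = (\<Inter>n\<in>{1::nat..}. wstar_cconv (active_derivs (1 / real n)))"
  unfolding T_C_def active_derivs_def ..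

lemma active_derivs_subset: "active_derivs \<epsilon> \<subseteq> (\<lambda>\<phi>. gat_deriv \<phi> xh) ` C"
  unfolding active_derivs_def by auto

lemma active_derivs_mono: "\<delta> \<le> \<epsilon> \<Longrightarrow> active_derivs \<delta> \<subseteq> active_derivs \<epsilon>"
  unfolding active_derivs_def by auto

lemma inactive_constraints_stay_positive:
  assumes "0 < \<epsilon>"
  obtains W where "open W" "xh \<in> W" "\<forall>y\<in>W. \<forall>\<phi>\<in>C. \<epsilon> < \<phi> xh \<longrightarrow> 0 < \<phi> y"
proof (cases "{\<phi>\<in>C. \<phi> xh \<noteq> 0} = {}")
  case True
  have "\<not> \<epsilon> < \<phi> xh" if "\<phi> \<in> C" for \<phi>
    using True that assms by auto
  then show ?thesis
    using that[of UNIV] by blast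
next
  case False
  with C_equi_lsc have "equi_lsc {\<phi>\<in>C. \<phi> xh \<noteq> 0} xh"
    by blast
  then have "\<exists>W. open W \<and> xh \<in> W \<and> (\<forall>y\<in>W. \<forall>\<phi>\<in>{\<phi>\<in>C. \<phi> xh \<noteq> 0}. \<phi> y - \<phi> xh > - \<epsilon>)"
    using assms unfolding equi_lsc_def by simp
  then obtain W where W: "open W" "xh \<in> W"
    and near: "\<forall>y\<in>W. \<forall>\<phi>\<in>{\<phi>\<in>C. \<phi> xh \<noteq> 0}. \<phi> y - \<phi> xh > - \<epsilon>"
    by blast
  show ?thesis
  proof (rule that[OF W], intro ballI impI)
    fix y \<phi>
    assume "y \<in> W" "\<phi> \<in> C" "\<epsilon> < \<phi> xh"
    with near assms have "\<phi> y - \<phi> xh > - \<epsilon>"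
      by simp
    with \<open>\<epsilon> < \<phi> xh\<close> show "0 < \<phi> y"
      by linarith
  qed
qed

lemma active_derivs_nonempty:
  assumes "xh \<notin> interior F" "0 < \<epsilon>"
  shows "active_derivs \<epsilon> \<noteq> {}"
proof
  assume "active_derivs \<epsilon> = {}"
  then have all_inactive: "\<epsilon> < \<phi> xh" if "\<phi> \<in> C" for \<phi>
    using constraint_nonneg[OF that] that unfolding active_derivs_def by fastforce
  obtain W where W: "open W" "xh \<in> W" "\<forall>y\<in>W. \<forall>\<phi>\<in>C. \<epsilon> < \<phi> xh \<longrightarrow> 0 < \<phi> y"
    using inactive_constraints_stay_positive[OF assms(2)] .
  then have "W \<subseteq> F"
    using all_inactive unfolding F_eq nonneg_set_def by (fastforce intro: less_imp_le)
  with W(1,2) assms(1) show False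
    using interior_maximal by blast
qed

lemma no_uniform_ascent_direction:
  assumes "0 < gat_deriv f xh v" "0 < c" "0 < \<epsilon>"
    and "\<forall>\<phi>\<in>C. \<phi> xh \<le> \<epsilon> \<longrightarrow> c \<le> gat_deriv \<phi> xh v"
  shows False
proof -
  obtain W where W: "open W" "xh \<in> W" "\<forall>y\<in>W. \<forall>\<phi>\<in>C. \<epsilon> < \<phi> xh \<longrightarrow> 0 < \<phi> y"
    using inactive_constraints_stay_positive[OF assms(3)] .
  have "eventually (\<lambda>t. 0 < t \<and> xh + t *\<^sub>R v \<in> \<Omega> \<inter> W \<and> f xh < f (xh + t *\<^sub>R v) \<and>
      (\<forall>\<phi>\<in>C. \<phi> xh + t * (gat_deriv \<phi> xh v - c) < \<phi> (xh + t *\<^sub>R v))) (at_right 0)"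
    using xh_in W(2)
    by (intro eventually_conj eventually_at_right_less hlc_tvs_eventually_ray_in_open[OF hlc]
        open_Int open_\<Omega> W(1) has_gateaux_deriv_eventually_increasing[OF f_has_gateaux_deriv assms(1)]
        equi_gateaux_eventually_lower_bound[OF C_equi_gateaux assms(2)]) auto
  then obtain t where t: "0 < t" "xh + t *\<^sub>R v \<in> \<Omega> \<inter> W" "f xh < f (xh + t *\<^sub>R v)"
    "\<forall>\<phi>\<in>C. \<phi> xh + t * (gat_deriv \<phi> xh v - c) < \<phi> (xh + t *\<^sub>R v)"
    using eventually_happens'[OF trivial_limit_at_right_real] by blast
  have "xh + t *\<^sub>R v \<in> F"
    unfolding F_eq nonneg_set_def
  proof (intro CollectI ballI)
    fix \<phi>
    assume "\<phi> \<in> C"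
    show "0 \<le> \<phi> (xh + t *\<^sub>R v)"
    proof (cases "\<phi> xh \<le> \<epsilon>")
      case True
      then have "0 \<le> \<phi> xh + t * (gat_deriv \<phi> xh v - c)"
        using assms(4) constraint_nonneg \<open>\<phi> \<in> C\<close> \<open>0 < t\<close> by simp
      with t(4) \<open>\<phi> \<in> C\<close> show ?thesis
        by (meson less_imp_le order_trans)
    next
      case False
      then show ?thesis
        using W(3) t(2) \<open>\<phi> \<in> C\<close> by (fastforce intro: less_imp_le)
    qed
  qed
  with t(2) have "xh + t *\<^sub>R v \<in> \<Omega> \<inter> F"
    by blast
  with xh_max have "f (xh + t *\<^sub>R v) \<le> f xh"
    by blast
  with t(3) show False
    by simp
qed

lemma zero_on_segment_to_active_hull:
  assumes "xh \<notin> interior F" "0 < \<epsilon>"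
  shows "\<exists>l\<in>{0..1}. \<exists>x\<in>wstar_cconv (active_derivs \<epsilon>). \<forall>v. l * gat_deriv f xh v + (1 - l) * x v = 0"
proof (rule ccontr)
  assume no_zero: "\<not> ?thesis"
  define T where "T = wstar_cconv (active_derivs \<epsilon>)"
  define K where "K = (\<lambda>(l, x). \<lambda>v. l * gat_deriv f xh v + (1 - l) * x v) ` ({0..1::real} \<times> T)"
  have segment_in_K: "(\<lambda>v. l * gat_deriv f xh v + (1 - l) * x v) \<in> K" if "l \<in> {0..1}" "x \<in> T" for l x
    unfolding K_def using that by force
  have "compact K"
    unfolding K_def T_def
    by (intro compact_continuous_image continuous_on_subset[OF continuous_on_segment_comb]
        compact_Times compact_Icc compact_wstar_cconv_subset[OF compact_derivs active_derivs_subset]) auto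
  moreover have "fconvex K"
    unfolding K_def T_def by (intro fconvex_segments fconvex_wstar_cconv)
  moreover have "\<forall>k\<in>K. linear k"
    unfolding K_def T_def wstar_cconv_def
    by (auto intro!: dual_space_linear dual_space_lincomb f_deriv_dual)
  moreover have "(\<lambda>_. 0) \<notin> K"
    using no_zero unfolding K_def T_def by (force simp: fun_eq_iff)
  ultimately obtain v m where m: "0 < m" "\<forall>k\<in>K. m \<le> k v"
    by (rule compact_fconvex_separation_from_0)
  have active_in_T: "active_derivs \<epsilon> \<subseteq> T"
    unfolding T_def using constraint_deriv_dual
    by (intro subset_wstar_cconv) (auto simp: active_derivs_def)
  obtain x0 where "x0 \<in> T"
    using active_derivs_nonempty[OF assms] active_in_T by blast
  then have "m \<le> gat_deriv f xh v"
    using m(2) segment_in_K[of 1 x0] by fastforce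
  moreover have "m \<le> gat_deriv \<phi> xh v" if "\<phi> \<in> C" "\<phi> xh \<le> \<epsilon>" for \<phi>
  proof -
    have "gat_deriv \<phi> xh \<in> T"
      using that active_in_T constraint_nonneg unfolding active_derivs_def by fastforce
    then show ?thesis
      using m(2) segment_in_K[of 0 "gat_deriv \<phi> xh"] by fastforce
  qed
  ultimately show False
    using m(1) assms(2) by (intro no_uniform_ascent_direction[of v m \<epsilon>]) auto
qed

lemma zero_on_segment_to_T_C:
  assumes "xh \<notin> interior F"
  shows "\<exists>l\<in>{0..1}. \<exists>x\<in>T_C C xh. \<forall>v. l * gat_deriv f xh v + (1 - l) * x v = 0"
proof -
  define W where "W = wstar_cconv ((\<lambda>\<phi>. gat_deriv \<phi> xh) ` C)"
  define L where "L = (\<lambda>(l, x). \<lambda>v. l * gat_deriv f xh v + (1 - l) * x v :: real)"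
  define H where "H n = closure (fconv (active_derivs (1 / real n)))" for n :: nat
  define A where "A n = {z. snd z \<in> H n \<and> (\<forall>v. L z v = 0)}" for n
  have hull_eq: "wstar_cconv (active_derivs (1 / real n)) = W \<inter> H n" for n
    unfolding W_def H_def by (rule wstar_cconv_subset_eq[OF active_derivs_subset])
  have "({0..1::real} \<times> W) \<inter> (\<Inter>n\<in>{1..}. A n) \<noteq> {}"
  proof (rule compact_Int_INTER_antimono_nonempty)
    show "compact ({0..1::real} \<times> W)"
      unfolding W_def using compact_derivs by (intro compact_Times) auto
    show "{1::nat..} \<noteq> {}"
      by auto
  next
    fix n
    have L_cont: "continuous_on UNIV (\<lambda>z. L z v)" for v
      unfolding L_def by (rule continuous_on_product_then_coordinatewise[OF continuous_on_segment_comb])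
    have "closed (snd -` H n \<inter> (\<Inter>v. (\<lambda>z. L z v) -` {0}))"
      unfolding H_def
      by (intro closed_Int closed_vimage closed_INT ballI closed_singleton closed_closure L_cont
          continuous_on_snd continuous_on_id)
    moreover have "A n = snd -` H n \<inter> (\<Inter>v. (\<lambda>z. L z v) -` {0})"
      unfolding A_def by auto
    ultimately show "closed (A n)"
      by simp
  next
    fix n :: nat
    assume "n \<in> {1..}"
    then have "0 < 1 / real n"
      by simp
    then obtain l x where "l \<in> {0..1}" "x \<in> wstar_cconv (active_derivs (1 / real n))"
      "\<forall>v. l * gat_deriv f xh v + (1 - l) * x v = 0"
      using zero_on_segment_to_active_hull[OF assms] by blast
    then have "(l, x) \<in> ({0..1::real} \<times> W) \<inter> A n"
      unfolding A_def L_def hull_eq by simp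
    then show "({0..1::real} \<times> W) \<inter> A n \<noteq> {}"
      by blast
  next
    fix i j :: nat
    assume "i \<in> {1..}" "i \<le> j"
    then have "H j \<subseteq> H i"
      unfolding H_def by (intro closure_mono fconv_mono active_derivs_mono) (simp add: frac_le)
    then show "A j \<subseteq> A i"
      unfolding A_def by blast
  qed
  then obtain z where "z \<in> {0..1} \<times> W" "\<forall>n\<in>{1..}. z \<in> A n"
    by blast
  moreover obtain l x where "z = (l, x)"
    by (cases z)
  ultimately have lx: "(l, x) \<in> {0..1} \<times> W" "\<forall>n\<in>{1..}. (l, x) \<in> A n"
    by simp_all
  then have "x \<in> T_C C xh"
    unfolding T_C_eq_INTER_active_derivs hull_eq A_def by auto
  moreover have "\<forall>v. l * gat_deriv f xh v + (1 - l) * x v = 0"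
    using bspec[OF lx(2), of 1] unfolding A_def L_def by simp
  ultimately show ?thesis
    using lx(1) by blast
qed

lemma interior_gat_deriv_eq_0:
  assumes "xh \<in> interior F"
  shows "gat_deriv f xh = (\<lambda>_. 0)"
  using hlc open_Int[OF open_\<Omega> open_interior] _ _ f_has_gateaux_deriv
  by (rule has_gateaux_deriv_local_max_eq_0) (use xh_in assms xh_max interior_subset in auto)

end

theorem theorem4p2:
  fixes f :: "'a::{real_vector,t2_space} \<Rightarrow> real"
    and \<Omega> F :: "'a set" and C :: "('a \<Rightarrow> real) set" and xh :: 'a
  assumes "hlc_tvs TYPE('a)"
    and "open \<Omega>" and "\<Omega> \<noteq> {}" and "F \<noteq> {}"
    and "xh \<in> \<Omega> \<inter> F"
    and "\<forall>x\<in>\<Omega> \<inter> F. f x \<le> f xh"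
    and "gateaux_differentiable f xh"
    and "weak_admissible F xh C"
  shows "(xh \<in> interior F \<and> gat_deriv f xh = (\<lambda>_. 0))
         \<or> (xh \<in> F - interior F \<and>
            (\<exists>lam \<beta>s xs. lam \<ge> 0 \<and> \<beta>s \<ge> 0 \<and> xs \<in> T_C C xh \<and> (lam, \<beta>s) \<noteq> (0, 0) \<and>
                 (\<lambda>v. lam * gat_deriv f xh v + \<beta>s * xs v) = (\<lambda>_. 0)) \<and>
            ((\<lambda>_. 0) \<notin> T_C C xh \<longrightarrow>
               (\<exists>\<beta>s xs. \<beta>s \<ge> 0 \<and> xs \<in> T_C C xh \<and>
                 (\<lambda>v. gat_deriv f xh v + \<beta>s * xs v) = (\<lambda>_. 0))))"
proof -
  interpret constrained_max f \<Omega> F C xh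
    using assms by unfold_locales auto
  show ?thesis
  proof (cases "xh \<in> interior F")
    case True
    then show ?thesis
      by (simp add: interior_gat_deriv_eq_0)
  next
    case False
    then obtain l x where l: "l \<in> {0..1}" and x: "x \<in> T_C C xh"
      and zero: "\<forall>v. l * gat_deriv f xh v + (1 - l) * x v = 0"
      using zero_on_segment_to_T_C by blast
    show ?thesis
    proof (intro disjI2 conjI impI)
      show "xh \<in> F - interior F"
        using xh_in False by blast
      show "\<exists>lam \<beta>s xs. lam \<ge> 0 \<and> \<beta>s \<ge> 0 \<and> xs \<in> T_C C xh \<and> (lam, \<beta>s) \<noteq> (0, 0) \<and>
          (\<lambda>v. lam * gat_deriv f xh v + \<beta>s * xs v) = (\<lambda>_. 0)"
        using l x zero by (intro exI[of _ l] exI[of _ "1 - l"] exI[of _ x]) auto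
      assume zero_notin: "(\<lambda>_. 0) \<notin> T_C C xh"
      have "l \<noteq> 0"
      proof
        assume "l = 0"
        then have "x = (\<lambda>_. 0)"
          using zero by (simp add: fun_eq_iff)
        with x zero_notin show False
          by simp
      qed
      with l have "0 < l"
        by simp
      then show "\<exists>\<beta>s xs. \<beta>s \<ge> 0 \<and> xs \<in> T_C C xh \<and> (\<lambda>v. gat_deriv f xh v + \<beta>s * xs v) = (\<lambda>_. 0)"
        using l x zero by (intro exI[of _ "(1 - l) / l"] exI[of _ x]) (auto simp: field_simps)
    qed
  qed
qed

end
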